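(* For every integer $M\ge3$, the $M\times M$ circulant matrix $\mathbf C$ with first row $(1,-1,0,\dots,0,1)$ (i.e. $(\mathbf C\mathbf x)_p=x_p+x_{p-1}-x_{p+1}$ with indices modulo $M$) is invertible. Hence for every $\boldsymbol\psi\in\mathbb R^M$ the system $\mathbf C\mathbf x=\boldsymbol\psi$ has the unique solution $\mathbf x=\mathbf C^{-1}\boldsymbol\psi$; in particular, the Tensor Ring ranks, which satisfy $\mathbf C(\log r_1,\dots,\log r_M)^\top=\boldsymbol\psi$ with $\psi_p=\log\xi_p$, are uniquely determined by $\boldsymbol\psi$ via $r_p=\exp(x_p)$.
   Context: In the Tensor Ring model of order $M$ with ranks $(r_1,\dots,r_M)$, $\xi_p:=(\mathbb E[Y])^2v_{\{p,p+1\}}/(v_{\{p\}}v_{\{p+1\}})$ is a quantity computed from the mean $\mathbb E[Y]$ and pure interaction terms $v_S$ (inclusion–exclusion combinations of exact-sharing covariances of the observed tensor entries), and the paper shows that $x_p=\log r_p$ satisfies $x_p+x_{p-1}-x_{p+1}=\log\xi_p$ for $p=1,\dots,M$ (indices modulo $M$). *)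

theory Defs
  imports "Jordan_Normal_Form.Matrix"
begin

definition circC :: "nat \<Rightarrow> real mat" where
  "circC M = mat M M (\<lambda>(i,j).
      (if j = i then 1 else 0)
    + (if j = (i + M - 1) mod M then 1 else 0)
    - (if j = (i + 1) mod M then 1 else 0))"

end

theory Submission
  imports Defs "Jordan_Normal_Form.Determinant"
begin

text \<open>The quadratic form of \<open>C\<close> is the squared Euclidean norm: the off-diagonal
  contributions \<open>\<Sum> x\<^sub>p x\<^sub>p\<^sub>-\<^sub>1\<close> and \<open>\<Sum> x\<^sub>p x\<^sub>p\<^sub>+\<^sub>1\<close> are the same sum up to a cyclic shift
  of the index, so they cancel. Hence \<open>C x = 0\<close> forces \<open>x = 0\<close>, so \<open>det C \<noteq> 0\<close> and \<open>C\<close> has a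
  two-sided inverse; uniqueness of the ranks follows because \<open>ln\<close> and \<open>exp\<close> are mutually
  inverse on the positive reals.\<close>

lemma circC_carrier_mat: "circC M \<in> carrier_mat M M"
  unfolding circC_def by simp

lemma sum_indicator_mult:
  fixes f :: "nat \<Rightarrow> 'a::semiring_1"
  assumes "a < M"
  shows "(\<Sum>j<M. (if j = a then 1 else 0) * f j) = f a"
  using assms by (simp add: of_bool_def[symmetric])

lemma circC_mult_vec_index:
  assumes x: "x \<in> carrier_vec M" and i: "i < M"
  shows "(circC M *\<^sub>v x) $ i = x $ i + x $ ((i + M - 1) mod M) - x $ ((i + 1) mod M)"
proof -
  have "(circC M *\<^sub>v x) $ i = (\<Sum>j<M. ((if j = i then 1 else 0)
      + (if j = (i + M - 1) mod M then 1 else 0)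
      - (if j = (i + 1) mod M then 1 else 0)) * x $ j)"
    using x i unfolding circC_def by (simp add: scalar_prod_def lessThan_atLeast0)
  also have "\<dots> = (\<Sum>j<M. (if j = i then 1 else 0) * x $ j)
      + (\<Sum>j<M. (if j = (i + M - 1) mod M then 1 else 0) * x $ j)
      - (\<Sum>j<M. (if j = (i + 1) mod M then 1 else 0) * x $ j)"
    by (simp add: algebra_simps sum.distrib sum_subtractf)
  also have "\<dots> = x $ i + x $ ((i + M - 1) mod M) - x $ ((i + 1) mod M)"
    using i by (simp only: sum_indicator_mult mod_less_divisor gr_implies_not0 neq0_conv)
  finally show ?thesis .
qed

lemma cyclic_pred_succ: "i < M \<Longrightarrow> ((i + 1) mod M + M - 1) mod M = (i::nat)"
  by (cases "i + 1 = M") auto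

lemma cyclic_succ_pred: "i < M \<Longrightarrow> ((i + M - 1) mod M + 1) mod M = (i::nat)"
  by (cases i) (auto simp: mod_Suc)

lemma sum_lessThan_rotate:
  fixes g :: "nat \<Rightarrow> 'a::comm_monoid_add"
  shows "(\<Sum>i<M. g ((i + 1) mod M)) = (\<Sum>i<M. g i)"
  using cyclic_pred_succ cyclic_succ_pred
  by (intro sum.reindex_bij_witness[where i = "\<lambda>k. (k + M - 1) mod M" and j = "\<lambda>i. (i + 1) mod M"]) auto

lemma circC_quadratic_form:
  assumes x: "x \<in> carrier_vec M"
  shows "(\<Sum>i<M. x $ i * (circC M *\<^sub>v x) $ i) = (\<Sum>i<M. (x $ i)\<^sup>2)"
proof -
  let ?pred = "\<lambda>i. (i + M - 1) mod M" and ?succ = "\<lambda>i. (i + 1) mod M"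
  have "(\<Sum>i<M. x $ ?pred i * x $ i) = (\<Sum>i<M. x $ ?pred (?succ i) * x $ ?succ i)"
    by (rule sum_lessThan_rotate[symmetric])
  also have "\<dots> = (\<Sum>i<M. x $ i * x $ ?succ i)"
    using cyclic_pred_succ by (intro sum.cong) (auto simp: mult.commute)
  finally have shift: "(\<Sum>i<M. x $ ?pred i * x $ i) = (\<Sum>i<M. x $ i * x $ ?succ i)" .
  have "(\<Sum>i<M. x $ i * (circC M *\<^sub>v x) $ i) = (\<Sum>i<M. x $ i * (x $ i + x $ ?pred i - x $ ?succ i))"
    using x by (simp add: circC_mult_vec_index)
  also have "\<dots> = (\<Sum>i<M. (x $ i)\<^sup>2) + (\<Sum>i<M. x $ ?pred i * x $ i) - (\<Sum>i<M. x $ i * x $ ?succ i)"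
    by (simp add: algebra_simps power2_eq_square sum.distrib sum_subtractf)
  finally show ?thesis
    using shift by simp
qed

lemma circC_mult_vec_eq_zero:
  assumes x: "x \<in> carrier_vec M" and Cx: "circC M *\<^sub>v x = 0\<^sub>v M"
  shows "x = 0\<^sub>v M"
proof -
  have "(\<Sum>i<M. (x $ i)\<^sup>2) = 0"
    using circC_quadratic_form[OF x] Cx by simp
  then have "x $ i = 0" if "i < M" for i
    using that by (simp add: sum_nonneg_eq_0_iff)
  then show ?thesis
    using x by (intro eq_vecI) auto
qed

lemma det_circC_nonzero: "det (circC M) \<noteq> 0"
  using det_0_iff_vec_prod_zero_field[OF circC_carrier_mat] circC_mult_vec_eq_zero by blast

lemma det_nonzero_obtains_inverse_mat:
  fixes A :: "'a::field mat"
  assumes "A \<in> carrier_mat n n" and "det A \<noteq> 0"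
  obtains B where "B \<in> carrier_mat n n" "A * B = 1\<^sub>m n" "B * A = 1\<^sub>m n"
  using det_non_zero_imp_unit[OF assms, of "()"] that by (auto simp: Units_def ring_mat_simps)

lemma mult_mat_vec_eq_iff_inverse:
  fixes A B :: "'a::semiring_1 mat"
  assumes A: "A \<in> carrier_mat n n" and B: "B \<in> carrier_mat n n"
    and AB: "A * B = 1\<^sub>m n" and BA: "B * A = 1\<^sub>m n"
    and x: "x \<in> carrier_vec n" and y: "y \<in> carrier_vec n"
  shows "A *\<^sub>v x = y \<longleftrightarrow> x = B *\<^sub>v y"
proof
  assume "A *\<^sub>v x = y"
  then have "B *\<^sub>v y = (B * A) *\<^sub>v x"
    using A B x by simp
  also have "\<dots> = x"
    using BA x by simp
  finally show "x = B *\<^sub>v y" ..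
next
  assume "x = B *\<^sub>v y"
  then have "A *\<^sub>v x = (A * B) *\<^sub>v y"
    using A B y by simp
  also have "\<dots> = y"
    using AB y by simp
  finally show "A *\<^sub>v x = y" .
qed

theorem mainTheorem12:
  fixes M :: nat
  assumes "M \<ge> 3"
  shows "invertible_mat (circC M) \<and>
    (\<exists>Cinv \<in> carrier_mat M M.
       circC M * Cinv = 1\<^sub>m M \<and> Cinv * circC M = 1\<^sub>m M \<and>
       (\<forall>\<psi> \<in> carrier_vec M.
          (\<forall>x \<in> carrier_vec M. circC M *\<^sub>v x = \<psi> \<longleftrightarrow> x = Cinv *\<^sub>v \<psi>) \<and>
          (\<forall>r :: nat \<Rightarrow> real. (\<forall>p<M. r p > 0) \<and>
              circC M *\<^sub>v vec M (\<lambda>p. ln (r p)) = \<psi> \<longrightarrow>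
              (\<forall>p<M. r p = exp ((Cinv *\<^sub>v \<psi>) $ p)))))"
proof -
  obtain B where B: "B \<in> carrier_mat M M" and CB: "circC M * B = 1\<^sub>m M" and BC: "B * circC M = 1\<^sub>m M"
    using det_nonzero_obtains_inverse_mat[OF circC_carrier_mat det_circC_nonzero] .
  note solve = mult_mat_vec_eq_iff_inverse[OF circC_carrier_mat B CB BC]
  have ranks: "r p = exp ((B *\<^sub>v \<psi>) $ p)"
    if "\<psi> \<in> carrier_vec M" "circC M *\<^sub>v vec M (\<lambda>p. ln (r p)) = \<psi>" "r p > 0" "p < M" for \<psi> r p
  proof -
    have "vec M (\<lambda>p. ln (r p)) = B *\<^sub>v \<psi>"
      using solve that by simp
    then have "ln (r p) = (B *\<^sub>v \<psi>) $ p"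
      using \<open>p < M\<close> by (metis index_vec)
    then show ?thesis
      using \<open>r p > 0\<close> by (metis exp_ln)
  qed
  have "invertible_mat (circC M)"
    using circC_carrier_mat[of M] B CB BC by (auto simp: invertible_mat_def inverts_mat_def)
  then show ?thesis
    using B CB BC solve ranks by blast
qed

end
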